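(* Let $K$ be a commutative ring with unit and let $\mathfrak X$ be a class of representations in $Rep\text{-}K$ of the form $\mathfrak X=T^*=\{(V,G)\mid \text{every formula of } T \text{ holds in } (V,G)\}$, where $T$ is a set of action-type formulas. Then $\mathfrak X$ is saturated, right-hereditary and right-local.
   Context: $Rep\text{-}K$ is the variety of two-sorted algebras (representations) $(V,G)$, where $V$ is a $K$-module, $G$ a group, and $\circ: V\times G\to V$ an action such that $a\mapsto a\circ g$ is $K$-linear, $(a\circ g_1)\circ g_2=a\circ g_1g_2$, and $a\circ 1=a$. Morphisms are pairs $(\alpha,\beta)$ with $\alpha$ a $K$-module homomorphism, $\beta$ a group homomorphism, and $(a\circ g)^\alpha=a^\alpha\circ g^\beta$. For countable sets $X,Y$, let $F=F(Y)$ be the free group on $Y$, $KF$ its group algebra, and $W=W(X,Y)=(XKF,F)$ the free representation, where $XKF$ is the free right $KF$-module on $X$ with action $w\circ f=wf$. Every pair of maps $X\to V$, $Y\to G$ extends uniquely to a homomorphism $\mu=(\alpha,\beta):W\to(V,G)$. Action-type formulas are built from atomic formulas $w\equiv 0$ ($w\in XKF$) using $\vee,\wedge,\neg$ and quantifiers $\exists x$ ($x\in X$) only (no group equalities $f\equiv1$, no quantifiers over $Y$). The value $Val_{(V,G)}(u)\subseteq Hom(W,(V,G))$ is defined by: $\mu=(\alpha,\beta)\in Val(w\equiv0)$ iff $w^\alpha=0$ in $V$ (here $w^\alpha=\sum x_i^\alpha\circ u_i^\beta$ for $w=\sum x_iu_i$); $\vee,\wedge,\neg$ act as union, intersection, complement;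 $\mu=(\alpha,\beta)\in Val(\exists x\,u)$ iff there is $\nu=(\alpha',\beta)\in Val(u)$ with $\alpha'(x')=\alpha(x')$ for all $x'\in X$, $x'\neq x$. A formula $u$ holds in $(V,G)$ if $Val_{(V,G)}(u)=Hom(W,(V,G))$. For a representation $(V,G)$, the corresponding faithful representation is $(V,\overline G)$ with $\overline G=G/N$, $N$ the kernel of the action of $G$ on $V$. A class $\mathfrak X$ is saturated if $(V,G)\in\mathfrak X \iff (V,\overline G)\in\mathfrak X$; right-hereditary if $(V,G)\in\mathfrak X$ implies $(V,H)\in\mathfrak X$ for every subgroup $H\le G$; right-local if $(V,G)\in\mathfrak X$ whenever $(V,H)\in\mathfrak X$ for all finitely generated subgroups $H\le G$. *)

theory Defs
  imports "HOL-Algebra.Algebra" "HOL-Library.Countable"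
begin

text \<open>A representation (V,G) of Rep-K: V is the K-module given by the whole type 'v
  with scalar multiplication scale, G is a group (HOL-Algebra), act is the action V x G -> V.\<close>

definition is_rep ::
  "('k::comm_ring_1 \<Rightarrow> 'v::ab_group_add \<Rightarrow> 'v) \<Rightarrow> ('g, 'b) monoid_scheme \<Rightarrow> ('v \<Rightarrow> 'g \<Rightarrow> 'v) \<Rightarrow> bool"
  where "is_rep scale G act \<longleftrightarrow>
     Modules.module scale \<and> group G \<and>
     (\<forall>g\<in>carrier G. \<forall>a b. act (a + b) g = act a g + act b g) \<and>
     (\<forall>g\<in>carrier G. \<forall>k a. act (scale k a) g = scale k (act a g)) \<and>
     (\<forall>g1\<in>carrier G. \<forall>g2\<in>carrier G. \<forall>a. act (act a g1) g2 = act a (g1 \<otimes>\<^bsub>G\<^esub> g2)) \<and>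
     (\<forall>a. act a \<one>\<^bsub>G\<^esub> = a)"

text \<open>Elements of the free group F(Y) are represented by words over Y and their inverses
  ((y,True) = y, (y,False) = y^-1).  Elements of the free KF-module XKF are represented
  by finite formal sums  k_1 x_1 f_1 + ... + k_n x_n f_n.\<close>

type_synonym 'y fword = "('y \<times> bool) list"
type_synonym ('k, 'x, 'y) xkf = "('k \<times> 'x \<times> 'y fword) list"

fun weval :: "('g, 'b) monoid_scheme \<Rightarrow> ('y \<Rightarrow> 'g) \<Rightarrow> 'y fword \<Rightarrow> 'g" where
  "weval G \<beta> [] = \<one>\<^bsub>G\<^esub>"
| "weval G \<beta> ((y, b) # ws) =
     (if b then \<beta> y else inv\<^bsub>G\<^esub> (\<beta> y)) \<otimes>\<^bsub>G\<^esub> weval G \<beta> ws"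

definition xkf_eval ::
  "('k::comm_ring_1 \<Rightarrow> 'v::ab_group_add \<Rightarrow> 'v) \<Rightarrow> ('g, 'b) monoid_scheme \<Rightarrow> ('v \<Rightarrow> 'g \<Rightarrow> 'v)
   \<Rightarrow> ('x \<Rightarrow> 'v) \<Rightarrow> ('y \<Rightarrow> 'g) \<Rightarrow> ('k, 'x, 'y) xkf \<Rightarrow> 'v" where
  "xkf_eval scale G act \<alpha> \<beta> w =
     sum_list (map (\<lambda>(k, x, f). scale k (act (\<alpha> x) (weval G \<beta> f))) w)"

datatype ('k, 'x, 'y) aform =
    Eq0 "('k, 'x, 'y) xkf"
  | Or "('k, 'x, 'y) aform" "('k, 'x, 'y) aform"
  | And "('k, 'x, 'y) aform" "('k, 'x, 'y) aform"
  | Neg "('k, 'x, 'y) aform"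
  | Ex 'x "('k, 'x, 'y) aform"

text \<open>Hom(W,(V,G)) is identified with pairs of maps X -> V, Y -> G.\<close>
definition homs :: "('g, 'b) monoid_scheme \<Rightarrow> (('x \<Rightarrow> 'v) \<times> ('y \<Rightarrow> 'g)) set" where
  "homs G = {(\<alpha>, \<beta>). \<forall>y. \<beta> y \<in> carrier G}"

fun val ::
  "('k::comm_ring_1 \<Rightarrow> 'v::ab_group_add \<Rightarrow> 'v) \<Rightarrow> ('g, 'b) monoid_scheme \<Rightarrow> ('v \<Rightarrow> 'g \<Rightarrow> 'v)
   \<Rightarrow> ('k, 'x, 'y) aform \<Rightarrow> (('x \<Rightarrow> 'v) \<times> ('y \<Rightarrow> 'g)) set" where
  "val scale G act (Eq0 w) = {(\<alpha>, \<beta>) \<in> homs G. xkf_eval scale G act \<alpha> \<beta> w = 0}"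
| "val scale G act (Or u v) = val scale G act u \<union> val scale G act v"
| "val scale G act (And u v) = val scale G act u \<inter> val scale G act v"
| "val scale G act (Neg u) = homs G - val scale G act u"
| "val scale G act (Ex x u) =
     {(\<alpha>, \<beta>) \<in> homs G. \<exists>a. (\<alpha>(x := a), \<beta>) \<in> val scale G act u}"

definition holds_in ::
  "('k::comm_ring_1, 'x, 'y) aform \<Rightarrow> ('k \<Rightarrow> 'v::ab_group_add \<Rightarrow> 'v) \<Rightarrow> ('g, 'b) monoid_scheme
   \<Rightarrow> ('v \<Rightarrow> 'g \<Rightarrow> 'v) \<Rightarrow> bool" where
  "holds_in u scale G act \<longleftrightarrow> val scale G act u = homs G"

definition in_Tstar ::
  "('k::comm_ring_1, 'x, 'y) aform set \<Rightarrow> ('k \<Rightarrow> 'v::ab_group_add \<Rightarrow> 'v) \<Rightarrow> ('g, 'b) monoid_scheme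
   \<Rightarrow> ('v \<Rightarrow> 'g \<Rightarrow> 'v) \<Rightarrow> bool" where
  "in_Tstar T scale G act \<longleftrightarrow> is_rep scale G act \<and> (\<forall>u\<in>T. holds_in u scale G act)"

definition act_kernel :: "('g, 'b) monoid_scheme \<Rightarrow> ('v \<Rightarrow> 'g \<Rightarrow> 'v) \<Rightarrow> 'g set" where
  "act_kernel G act = {g \<in> carrier G. \<forall>a. act a g = a}"

definition faithful_group :: "('g, 'b) monoid_scheme \<Rightarrow> ('v \<Rightarrow> 'g \<Rightarrow> 'v) \<Rightarrow> 'g set monoid" where
  "faithful_group G act = G Mod (act_kernel G act)"

definition faithful_act :: "('v \<Rightarrow> 'g \<Rightarrow> 'v) \<Rightarrow> 'v \<Rightarrow> 'g set \<Rightarrow> 'v" where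
  "faithful_act act a C = act a (SOME g. g \<in> C)"

definition fin_gen_subgroup :: "'g set \<Rightarrow> ('g, 'b) monoid_scheme \<Rightarrow> bool" where
  "fin_gen_subgroup H G \<longleftrightarrow> subgroup H G \<and> (\<exists>S. finite S \<and> S \<subseteq> carrier G \<and> H = generate G S)"

end

theory Submission
  imports Defs
begin

text \<open>The value of an action-type formula at \<open>(\<alpha>, \<beta>)\<close> depends on \<open>\<beta>\<close> only through the
  operators \<open>a \<mapsto> a \<circ> f\<^sup>\<beta>\<close> for the finitely many group words \<open>f\<close> occurring in it.
  Consequently a group homomorphism \<open>h\<close> with \<open>a \<circ> h g = a \<circ> g\<close> carries values to values.
  The inclusion of a subgroup and the projection \<open>G \<rightarrow> G/N\<close> are such homomorphisms; the
  projection is surjective, so assignments into \<open>G/N\<close> lift to \<open>G\<close>.  For locality, an assignment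
  into \<open>G\<close> is modified off the finitely many letters of the formula so that it takes values in a
  finitely generated subgroup.\<close>

fun aform_words :: "('k, 'x, 'y) aform \<Rightarrow> 'y fword set" where
  "aform_words (Eq0 w) = (\<lambda>(k, x, f). f) ` set w"
| "aform_words (Or u v) = aform_words u \<union> aform_words v"
| "aform_words (And u v) = aform_words u \<union> aform_words v"
| "aform_words (Neg u) = aform_words u"
| "aform_words (Ex x u) = aform_words u"

definition aform_letters :: "('k, 'x, 'y) aform \<Rightarrow> 'y set" where
  "aform_letters u = (\<Union>f\<in>aform_words u. fst ` set f)"

lemma finite_aform_words: "finite (aform_words u)"
  by (induction u) auto

lemma finite_aform_letters: "finite (aform_letters u)"
  unfolding aform_letters_def using finite_aform_words by blast

lemma mem_homs_iff [simp]: "(\<alpha>, \<beta>) \<in> homs G \<longleftrightarrow> (\<forall>y. \<beta> y \<in> carrier G)"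
  by (simp add: homs_def)

lemma val_subset_homs: "val scale G act u \<subseteq> homs G"
  by (induction u) auto

lemma holds_in_iff: "holds_in u scale G act \<longleftrightarrow> homs G \<subseteq> val scale G act u"
  unfolding holds_in_def using val_subset_homs by blast

lemma is_rep_group: "is_rep scale G act \<Longrightarrow> group G"
  by (simp add: is_rep_def)

lemma weval_closed:
  assumes "group G" "\<forall>y. \<beta> y \<in> carrier G"
  shows "weval G \<beta> f \<in> carrier G"
  using assms by (induction f) (auto simp: group.is_monoid monoid.m_closed)

lemma weval_cong:
  assumes "\<And>y. y \<in> fst ` set f \<Longrightarrow> \<beta> y = \<beta>' y"
  shows "weval G \<beta> f = weval G \<beta>' f"
  using assms by (induction f) auto

lemma weval_hom:
  assumes "group_hom G G' h" "\<forall>y. \<beta> y \<in> carrier G"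
  shows "weval G' (h \<circ> \<beta>) f = h (weval G \<beta> f)"
proof (induction f)
  case Nil
  show ?case using assms(1) by (simp add: group_hom.hom_one)
next
  case (Cons p f)
  interpret group_hom G G' h by (rule assms(1))
  have "weval G \<beta> f \<in> carrier G" by (rule weval_closed[OF G.group_axioms assms(2)])
  then show ?case using Cons assms(2) by (cases p) simp
qed

lemma val_transfer:
  assumes "\<forall>y. \<beta> y \<in> carrier G" "\<forall>y. \<beta>' y \<in> carrier G'"
    and "\<And>f a. f \<in> aform_words u \<Longrightarrow> act a (weval G \<beta> f) = act' a (weval G' \<beta>' f)"
  shows "(\<alpha>, \<beta>) \<in> val scale G act u \<longleftrightarrow> (\<alpha>, \<beta>') \<in> val scale G' act' u"
  using assms(3)
proof (induction u arbitrary: \<alpha>)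
  case (Eq0 w)
  have "xkf_eval scale G act \<alpha> \<beta> w = xkf_eval scale G' act' \<alpha> \<beta>' w"
    unfolding xkf_eval_def using Eq0 by (intro arg_cong[where f = sum_list] map_cong) force+
  then show ?case using assms(1,2) by simp
qed (use assms(1,2) in auto)

lemma val_cong_letters:
  assumes "\<forall>y. \<beta> y \<in> carrier G" "\<forall>y. \<beta>' y \<in> carrier G"
    and "\<And>y. y \<in> aform_letters u \<Longrightarrow> \<beta> y = \<beta>' y"
  shows "(\<alpha>, \<beta>) \<in> val scale G act u \<longleftrightarrow> (\<alpha>, \<beta>') \<in> val scale G act u"
  using assms(1,2)
proof (rule val_transfer)
  fix f a assume "f \<in> aform_words u"
  then have "weval G \<beta> f = weval G \<beta>' f"
    using assms(3) by (intro weval_cong) (auto simp: aform_letters_def)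
  then show "act a (weval G \<beta> f) = act a (weval G \<beta>' f)" by simp
qed

lemma val_hom_iff:
  assumes hom: "group_hom G G' h" and \<beta>: "\<forall>y. \<beta> y \<in> carrier G"
    and compat: "\<And>g a. g \<in> carrier G \<Longrightarrow> act' a (h g) = act a g"
  shows "(\<alpha>, \<beta>) \<in> val scale G act u \<longleftrightarrow> (\<alpha>, h \<circ> \<beta>) \<in> val scale G' act' u"
proof (rule val_transfer)
  show "\<forall>y. (h \<circ> \<beta>) y \<in> carrier G'"
    using \<beta> group_hom.hom_closed[OF hom] by simp
  fix f a
  have "weval G \<beta> f \<in> carrier G"
    using weval_closed \<beta> group_hom.axioms(1)[OF hom] by blast
  then show "act a (weval G \<beta> f) = act' a (weval G' (h \<circ> \<beta>) f)"
    by (simp add: weval_hom[OF hom \<beta>] compat)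
qed (fact \<beta>)

lemma holds_in_hom:
  fixes G :: "('g, 'b) monoid_scheme" and G' :: "('h, 'c) monoid_scheme"
    and u :: "('k::comm_ring_1, 'x, 'y) aform" and scale :: "'k \<Rightarrow> 'v::ab_group_add \<Rightarrow> 'v"
  assumes hom: "group_hom G G' h"
    and compat: "\<And>g a. g \<in> carrier G \<Longrightarrow> act' a (h g) = act a g"
    and holds: "holds_in u scale G' act'"
  shows "holds_in u scale G act"
  unfolding holds_in_iff
proof clarify
  fix \<alpha> :: "'x \<Rightarrow> 'v" and \<beta> :: "'y \<Rightarrow> 'g"
  assume "(\<alpha>, \<beta>) \<in> homs G"
  then have \<beta>: "\<forall>y. \<beta> y \<in> carrier G" by simp
  then have "(\<alpha>, h \<circ> \<beta>) \<in> homs G'"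
    using group_hom.hom_closed[OF hom] by simp
  with holds have "(\<alpha>, h \<circ> \<beta>) \<in> val scale G' act' u"
    unfolding holds_in_iff by blast
  then show "(\<alpha>, \<beta>) \<in> val scale G act u"
    using val_hom_iff[where act = act and act' = act', OF hom \<beta> compat] by blast
qed

lemma holds_in_surj_hom:
  fixes G :: "('g, 'b) monoid_scheme" and G' :: "('h, 'c) monoid_scheme"
    and u :: "('k::comm_ring_1, 'x, 'y) aform" and scale :: "'k \<Rightarrow> 'v::ab_group_add \<Rightarrow> 'v"
  assumes hom: "group_hom G G' h" and surj: "h ` carrier G = carrier G'"
    and compat: "\<And>g a. g \<in> carrier G \<Longrightarrow> act' a (h g) = act a g"
    and holds: "holds_in u scale G act"
  shows "holds_in u scale G' act'"
  unfolding holds_in_iff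
proof clarify
  fix \<alpha> :: "'x \<Rightarrow> 'v" and \<beta>' :: "'y \<Rightarrow> 'h"
  assume "(\<alpha>, \<beta>') \<in> homs G'"
  then have "\<forall>y. \<exists>g\<in>carrier G. \<beta>' y = h g"
    using surj by auto
  then obtain \<beta> where \<beta>: "\<forall>y. \<beta> y \<in> carrier G" and lift: "\<beta>' = h \<circ> \<beta>"
    by (metis comp_apply ext)
  with holds have "(\<alpha>, \<beta>) \<in> val scale G act u"
    unfolding holds_in_iff by auto
  then show "(\<alpha>, \<beta>') \<in> val scale G' act' u"
    using val_hom_iff[where act = act and act' = act', OF hom \<beta> compat] lift by blast
qed

lemma group_hom_subgroup_incl:
  assumes "group G" "subgroup H G"
  shows "group_hom (G\<lparr>carrier := H\<rparr>) G id"
  using assms subgroup.subgroup_is_group[OF assms(2)] subgroup.subset[OF assms(2)]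
  by (auto simp: group_hom_def group_hom_axioms_def hom_def)

lemma is_rep_subgroup:
  assumes "is_rep scale G act" "subgroup H G"
  shows "is_rep scale (G\<lparr>carrier := H\<rparr>) act"
  using assms subgroup.subgroup_is_group[OF assms(2)] subgroup.subset[OF assms(2)]
  unfolding is_rep_def by (auto simp: subset_iff)

lemma holds_in_subgroup:
  assumes "group G" "subgroup H G" "holds_in u scale G act"
  shows "holds_in u scale (G\<lparr>carrier := H\<rparr>) act"
  using holds_in_hom[where act = act and act' = act, OF group_hom_subgroup_incl[OF assms(1,2)]] assms(3)
  by simp

lemma fin_gen_subgroup_generate:
  assumes "group G" "finite S" "S \<subseteq> carrier G"
  shows "fin_gen_subgroup (generate G S) G"
  using assms group.generate_is_subgroup unfolding fin_gen_subgroup_def by blast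

lemma holds_in_if_fin_gen_subgroups:
  fixes G :: "('g, 'b) monoid_scheme" (structure)
    and u :: "('k::comm_ring_1, 'x, 'y) aform" and scale :: "'k \<Rightarrow> 'v::ab_group_add \<Rightarrow> 'v"
  assumes "group G"
    and fin_gen: "\<And>H. fin_gen_subgroup H G \<Longrightarrow> holds_in u scale (G\<lparr>carrier := H\<rparr>) act"
  shows "holds_in u scale G act"
  unfolding holds_in_iff
proof clarify
  interpret group G by (rule assms(1))
  fix \<alpha> :: "'x \<Rightarrow> 'v" and \<beta> :: "'y \<Rightarrow> 'g"
  assume "(\<alpha>, \<beta>) \<in> homs G"
  then have \<beta>: "\<forall>y. \<beta> y \<in> carrier G" by simp
  define \<beta>\<^sub>0 where "\<beta>\<^sub>0 = (\<lambda>y. if y \<in> aform_letters u then \<beta> y else \<one>)"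
  define H where "H = generate G (range \<beta>\<^sub>0)"
  have range_sub: "range \<beta>\<^sub>0 \<subseteq> carrier G" using \<beta> by (auto simp: \<beta>\<^sub>0_def)
  have "range \<beta>\<^sub>0 \<subseteq> insert \<one> (\<beta> ` aform_letters u)" by (auto simp: \<beta>\<^sub>0_def)
  then have "finite (range \<beta>\<^sub>0)"
    using finite_aform_letters finite_subset by blast
  then have H: "fin_gen_subgroup H G" "subgroup H G"
    using fin_gen_subgroup_generate[OF group_axioms _ range_sub]
    unfolding H_def fin_gen_subgroup_def by blast+
  have \<beta>\<^sub>0_H: "\<forall>y. \<beta>\<^sub>0 y \<in> H" unfolding H_def by (auto intro: generate.incl)
  with fin_gen[OF H(1)] have "(\<alpha>, \<beta>\<^sub>0) \<in> val scale (G\<lparr>carrier := H\<rparr>) act u"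
    unfolding holds_in_iff by auto
  moreover have "(\<alpha>, \<beta>\<^sub>0) \<in> val scale (G\<lparr>carrier := H\<rparr>) act u \<longleftrightarrow>
      (\<alpha>, id \<circ> \<beta>\<^sub>0) \<in> val scale G act u"
    using \<beta>\<^sub>0_H by (intro val_hom_iff[OF group_hom_subgroup_incl[OF group_axioms H(2)]]) auto
  ultimately have "(\<alpha>, \<beta>\<^sub>0) \<in> val scale G act u" by simp
  moreover have "(\<alpha>, \<beta>) \<in> val scale G act u \<longleftrightarrow> (\<alpha>, \<beta>\<^sub>0) \<in> val scale G act u"
    using \<beta> range_sub by (intro val_cong_letters) (auto simp: \<beta>\<^sub>0_def)
  ultimately show "(\<alpha>, \<beta>) \<in> val scale G act u" by blast
qed

lemma act_kernel_normal:
  fixes G :: "('g, 'b) monoid_scheme" (structure)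
  assumes "is_rep scale G act"
  shows "act_kernel G act \<lhd> G"
proof -
  interpret group G using assms by (simp add: is_rep_def)
  have comp: "\<And>a g g'. g \<in> carrier G \<Longrightarrow> g' \<in> carrier G \<Longrightarrow> act (act a g) g' = act a (g \<otimes> g')"
    and one: "\<And>a. act a \<one> = a"
    using assms by (auto simp: is_rep_def)
  have cancel: "act (act a g) (inv g) = a" if "g \<in> carrier G" for a g
    using comp[of g "inv g"] one that by simp
  have kernel: "n \<in> act_kernel G act \<longleftrightarrow> n \<in> carrier G \<and> (\<forall>a. act a n = a)" for n
    by (simp add: act_kernel_def)
  have "subgroup (act_kernel G act) G"
  proof (rule subgroupI)
    show "act_kernel G act \<subseteq> carrier G" "act_kernel G act \<noteq> {}"
      using one kernel by auto
  next
    fix g assume g: "g \<in> act_kernel G act"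
    have "act a (inv g) = a" for a
      using cancel[of g a] g kernel by simp
    then show "inv g \<in> act_kernel G act" using g kernel by simp
  next
    fix g g' assume g: "g \<in> act_kernel G act" and g': "g' \<in> act_kernel G act"
    have "act a (g \<otimes> g') = a" for a
      using comp[of g g' a] g g' kernel by simp
    then show "g \<otimes> g' \<in> act_kernel G act" using g g' kernel by simp
  qed
  moreover have "g \<otimes> n \<otimes> inv g \<in> act_kernel G act"
    if g: "g \<in> carrier G" and n: "n \<in> act_kernel G act" for g n
  proof -
    have n': "n \<in> carrier G" "\<And>a. act a n = a" using n kernel by auto
    have "act a (g \<otimes> n \<otimes> inv g) = a" for a
    proof -
      have "act a (g \<otimes> n \<otimes> inv g) = act (act (act a g) n) (inv g)"
        using g n'(1) by (simp add: comp)
      also have "\<dots> = a" using g n' cancel by simp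
      finally show ?thesis .
    qed
    then show ?thesis using g n' kernel by simp
  qed
  ultimately show ?thesis by (simp add: normal_inv_iff)
qed

lemma faithful_act_rcos:
  fixes G :: "('g, 'b) monoid_scheme" (structure)
  assumes rep: "is_rep scale G act" and g: "g \<in> carrier G"
  shows "faithful_act act a (act_kernel G act #> g) = act a g"
proof -
  have "subgroup (act_kernel G act) G"
    using normal_imp_subgroup[OF act_kernel_normal[OF rep]] .
  then have "g \<in> act_kernel G act #> g"
    using group.rcos_self[OF is_rep_group[OF rep] g] by blast
  then have "(SOME g'. g' \<in> act_kernel G act #> g) \<in> act_kernel G act #> g" by (rule someI)
  then obtain n where n: "n \<in> act_kernel G act"
    and some: "(SOME g'. g' \<in> act_kernel G act #> g) = n \<otimes> g"
    unfolding r_coset_def by blast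
  have "act a (n \<otimes> g) = act (act a n) g"
    using rep g n unfolding is_rep_def act_kernel_def by auto
  also have "\<dots> = act a g" using n by (simp add: act_kernel_def)
  finally show ?thesis unfolding faithful_act_def some .
qed

lemma is_rep_faithful:
  fixes G :: "('g, 'b) monoid_scheme" (structure)
  assumes rep: "is_rep scale G act"
  shows "is_rep scale (faithful_group G act) (faithful_act act)"
proof -
  interpret normal "act_kernel G act" G by (rule act_kernel_normal[OF rep])
  have coset: "\<exists>g\<in>carrier G. C = act_kernel G act #> g"
    if "C \<in> carrier (faithful_group G act)" for C
    using that by (auto simp: faithful_group_def carrier_FactGroup)
  note fa = faithful_act_rcos[OF rep]
  show ?thesis
    unfolding is_rep_def faithful_group_def
  proof (intro conjI ballI allI)
    show "Modules.module scale" "group (G Mod act_kernel G act)"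
      using rep factorgroup_is_group by (auto simp: is_rep_def)
  next
    fix C a b assume "C \<in> carrier (G Mod act_kernel G act)"
    with coset obtain g where "g \<in> carrier G" "C = act_kernel G act #> g"
      unfolding faithful_group_def by blast
    with rep show "faithful_act act (a + b) C = faithful_act act a C + faithful_act act b C"
      by (simp add: fa is_rep_def)
  next
    fix C k a assume "C \<in> carrier (G Mod act_kernel G act)"
    with coset obtain g where "g \<in> carrier G" "C = act_kernel G act #> g"
      unfolding faithful_group_def by blast
    with rep show "faithful_act act (scale k a) C = scale k (faithful_act act a C)"
      by (simp add: fa is_rep_def)
  next
    fix C C' a
    assume "C \<in> carrier (G Mod act_kernel G act)" "C' \<in> carrier (G Mod act_kernel G act)"
    with coset obtain g g' where "g \<in> carrier G" "C = act_kernel G act #> g"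
      "g' \<in> carrier G" "C' = act_kernel G act #> g'"
      unfolding faithful_group_def by metis
    with rep show "faithful_act act (faithful_act act a C) C' =
        faithful_act act a (C \<otimes>\<^bsub>G Mod act_kernel G act\<^esub> C')"
      by (simp add: fa rcos_sum is_rep_def)
  next
    fix a
    have "act_kernel G act #> \<one> = act_kernel G act" by (rule coset_mult_one[OF subset])
    then show "faithful_act act a \<one>\<^bsub>G Mod act_kernel G act\<^esub> = a"
      using fa[OF one_closed] rep by (simp add: is_rep_def)
  qed
qed

lemma holds_in_faithful_iff:
  fixes G :: "('g, 'b) monoid_scheme" (structure)
  assumes rep: "is_rep scale G act"
  shows "holds_in u scale G act \<longleftrightarrow> holds_in u scale (faithful_group G act) (faithful_act act)"
proof -
  interpret normal "act_kernel G act" G by (rule act_kernel_normal[OF rep])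
  have hom: "group_hom G (faithful_group G act) (\<lambda>g. act_kernel G act #> g)"
    unfolding faithful_group_def
    by (intro group_hom.intro group_hom_axioms.intro is_group factorgroup_is_group r_coset_hom_Mod)
  have surj: "(\<lambda>g. act_kernel G act #> g) ` carrier G = carrier (faithful_group G act)"
    by (simp add: faithful_group_def carrier_FactGroup)
  note compat = faithful_act_rcos[OF rep]
  show ?thesis
    using holds_in_surj_hom[where act = act, OF hom surj compat]
      holds_in_hom[where act = act, OF hom compat] by blast
qed

theorem theorem2p1:
  fixes T :: "('k::comm_ring_1, 'x::countable, 'y::countable) aform set"
  shows
   "(\<forall>(scale :: 'k \<Rightarrow> 'v::ab_group_add \<Rightarrow> 'v) (G :: ('g, 'b) monoid_scheme) act.
        is_rep scale G act \<longrightarrow>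
        (in_Tstar T scale G act \<longleftrightarrow>
         in_Tstar T scale (faithful_group G act) (faithful_act act))) \<and>
    (\<forall>(scale :: 'k \<Rightarrow> 'v \<Rightarrow> 'v) (G :: ('g, 'b) monoid_scheme) act H.
        in_Tstar T scale G act \<and> subgroup H G \<longrightarrow>
        in_Tstar T scale (G\<lparr>carrier := H\<rparr>) act) \<and>
    (\<forall>(scale :: 'k \<Rightarrow> 'v \<Rightarrow> 'v) (G :: ('g, 'b) monoid_scheme) act.
        is_rep scale G act \<and>
        (\<forall>H. fin_gen_subgroup H G \<longrightarrow> in_Tstar T scale (G\<lparr>carrier := H\<rparr>) act) \<longrightarrow>
        in_Tstar T scale G act)"
proof (intro conjI allI impI)
  fix scale :: "'k \<Rightarrow> 'v \<Rightarrow> 'v" and G :: "('g, 'b) monoid_scheme" and act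
  assume "is_rep scale G act"
  then show "in_Tstar T scale G act \<longleftrightarrow> in_Tstar T scale (faithful_group G act) (faithful_act act)"
    using is_rep_faithful holds_in_faithful_iff unfolding in_Tstar_def by blast
next
  fix scale :: "'k \<Rightarrow> 'v \<Rightarrow> 'v" and G :: "('g, 'b) monoid_scheme" and act H
  assume "in_Tstar T scale G act \<and> subgroup H G"
  then show "in_Tstar T scale (G\<lparr>carrier := H\<rparr>) act"
    using is_rep_subgroup holds_in_subgroup[OF is_rep_group] unfolding in_Tstar_def by blast
next
  fix scale :: "'k \<Rightarrow> 'v \<Rightarrow> 'v" and G :: "('g, 'b) monoid_scheme" and act
  assume "is_rep scale G act \<and>
    (\<forall>H. fin_gen_subgroup H G \<longrightarrow> in_Tstar T scale (G\<lparr>carrier := H\<rparr>) act)"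
  then show "in_Tstar T scale G act"
    using holds_in_if_fin_gen_subgroups[OF is_rep_group] unfolding in_Tstar_def by blast
qed

end
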